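(* Let $f(z)=\sum_{n=0}^\infty a_n z^n$ and $g(z)=\sum_{n=0}^\infty b_n z^n$ be analytic in $\mathbb{D}$, and suppose $f$ is quasi-subordinate to $g$ relative to $\Phi$, i.e. there exist functions $\Phi$ and $\omega$ analytic in $\mathbb{D}$ with $\omega(0)=0$, $|\omega(z)|\le1$ and $|\Phi(z)|\le 1$ for all $z\in\mathbb{D}$ such that $f(z)=\Phi(z)g(\omega(z))$ for $z\in\mathbb{D}$. Let $\Phi_0=\Phi(0)$ (so $a_0=\Phi_0 b_0$), $f_0=f-a_0$, $g_0=g-b_0$, and for $0\le r<1$ set $\|f_0\|_r=\sum_{n=1}^\infty |a_n|^2 r^{2n}$ and $\|g_0\|_r=\sum_{n=1}^\infty |b_n|^2 r^{2n}$. Then for all $0\le r\le 1/3$, $$\sum_{n=0}^\infty |a_n|r^n+\left(\frac{1}{1+|a_0|}+\frac{r}{1-r}\right)\|f_0\|_r\le \sum_{n=0}^\infty |b_n|r^n+\left(\frac{1}{1+|b_0\Phi_0|}+\frac{r}{1-r}\right)\left(|b_0|^2(1-|\Phi_0|^2)+\|g_0\|_r\right).$$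
   Context: $\mathbb{D}$ denotes the open unit disk in $\mathbb{C}$. *)

theory Defs
  imports "HOL-Complex_Analysis.Complex_Analysis"
begin

definition taylor_coeff :: "(complex \<Rightarrow> complex) \<Rightarrow> nat \<Rightarrow> complex" where
  "taylor_coeff f n = (deriv ^^ n) f 0 / fact n"

end

theory Submission
  imports Defs
begin

(* For r <= 1/3, Bohr's inequality sum |c_n| r^n <= 1 holds for every
   analytic map of the disc into the closed disc: Wiener's bound |c_n| <= 1 - |c_0|^2 gives
   sum |c_n| r^n <= |c_0| + (1 - |c_0|^2) r / (1 - r) <= 1. Applied to Phi and to omega(z)/z, it bounds
   the majorant series of Phi by 1 and that of omega by r, and coefficientwise majorisation of
   products and compositions then yields sum |a_n| r^n <= sum |b_n| r^n.
   For the quadratic terms, Parseval's identity and |f| <= |g o omega| on circles bound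
   sum |a_n|^2 r^(2n) by the same sum for g o omega, which Littlewood's subordination principle
   bounds by sum |b_n|^2 r^(2n). Removing the constant terms, |a_0|^2 = |Phi(0)|^2 |b_0|^2 gives the
   claim; since a_0 = Phi(0) b_0 the weights in front of the quadratic terms agree. *)

section \<open>Taylor coefficients in the unit disc\<close>

lemma taylor_coeff_eq_fps_nth: "taylor_coeff f n = fps_nth (fps_expansion f 0) n"
  by (simp add: taylor_coeff_def fps_expansion_def)

lemma taylor_coeff_0 [simp]: "taylor_coeff f 0 = f 0"
  by (simp add: taylor_coeff_def)

lemma has_fps_expansion_unit_disc:
  "h holomorphic_on ball 0 1 \<Longrightarrow> h has_fps_expansion fps_expansion h 0"
  by (rule has_fps_expansion_fps_expansion) auto

lemma fps_conv_radius_expansion_unit_disc: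
  assumes "h holomorphic_on ball 0 1"
  shows "1 \<le> fps_conv_radius (fps_expansion h 0)"
proof -
  have "h holomorphic_on eball 0 (ereal 1)"
    using assms by simp
  from conv_radius_fps_expansion[OF this] show ?thesis
    by (simp add: one_ereal_def)
qed

lemma eval_fps_expansion_unit_disc:
  assumes "h holomorphic_on ball 0 1" "norm z < 1"
  shows "eval_fps (fps_expansion h 0) z = h z"
proof -
  have "h holomorphic_on eball 0 (ereal 1)"
    using assms by simp
  from eval_fps_expansion'[OF this, of z] assms show ?thesis
    by simp
qed

lemma norm_less_fps_conv_radius:
  assumes "1 \<le> fps_conv_radius F" "norm z < 1"
  shows "ereal (norm z) < fps_conv_radius F"
  using assms by (metis ereal_less(3) less_le_trans one_ereal_def)

lemma taylor_coeff_cong: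
  assumes "\<And>z. z \<in> ball 0 1 \<Longrightarrow> f z = g z"
  shows "taylor_coeff f n = taylor_coeff g n"
proof -
  have "eventually (\<lambda>z. z \<in> ball 0 1) (nhds (0::complex))"
    by (intro eventually_nhds_in_open) auto
  then have "eventually (\<lambda>z. f z = g z) (nhds 0)"
    by eventually_elim (use assms in auto)
  then show ?thesis
    by (simp add: taylor_coeff_eq_fps_nth fps_expansion_cong)
qed

lemma taylor_coeff_cmult:
  assumes "h holomorphic_on ball 0 1"
  shows "taylor_coeff (\<lambda>z. c * h z) n = c * taylor_coeff h n"
proof -
  have "(\<lambda>z. c * h z) has_fps_expansion fps_const c * fps_expansion h 0"
    by (intro fps_expansion_intros has_fps_expansion_unit_disc assms)
  then show ?thesis
    by (simp add: taylor_coeff_eq_fps_nth fps_expansion_eqI)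
qed

lemma norm_taylor_coeff_le:
  assumes hol: "h holomorphic_on ball 0 1"
    and bd: "\<And>z. z \<in> ball 0 1 \<Longrightarrow> z \<noteq> 0 \<Longrightarrow> norm (h z) \<le> B"
  shows "norm (taylor_coeff h n) \<le> B"
proof -
  have "eventually (\<lambda>\<rho>. \<rho> \<in> {0<..<1}) (at_left (1::real))"
    by (rule eventually_at_left_real) simp
  then have "eventually (\<lambda>\<rho>. norm (taylor_coeff h n) \<le> B / \<rho> ^ n) (at_left (1::real))"
  proof eventually_elim
    case (elim \<rho>)
    have "norm ((deriv ^^ n) h 0) \<le> fact n * B / \<rho> ^ n"
    proof (rule Cauchy_inequality)
      show "h holomorphic_on ball 0 \<rho>"
        using hol by (rule holomorphic_on_subset) (use elim in auto)
      show "continuous_on (cball 0 \<rho>) h"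
        using holomorphic_on_imp_continuous_on[OF hol] by (rule continuous_on_subset) (use elim in auto)
      show "\<And>x. norm (0 - x) = \<rho> \<Longrightarrow> norm (h x) \<le> B"
        using elim by (intro bd) auto
    qed (use elim in auto)
    then show ?case
      by (simp add: taylor_coeff_def norm_divide field_simps)
  qed
  moreover have "((\<lambda>\<rho>::real. B / \<rho> ^ n) \<longlongrightarrow> B / 1 ^ n) (at_left 1)"
    by (intro tendsto_intros) auto
  ultimately show ?thesis
    using tendsto_le[OF trivial_limit_at_left_real _ tendsto_const] by simp
qed

lemma summable_norm_taylor_coeff:
  assumes "h holomorphic_on ball 0 1" "0 \<le> r" "r < 1"
  shows "summable (\<lambda>n. norm (taylor_coeff h n) * r ^ n)"
proof -
  have "ereal (norm (complex_of_real r)) < fps_conv_radius (fps_expansion h 0)"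
    using assms by (intro norm_less_fps_conv_radius fps_conv_radius_expansion_unit_disc) auto
  from norm_summable_fps[OF this] show ?thesis
    using assms by (simp add: taylor_coeff_eq_fps_nth norm_mult norm_power)
qed

lemma eval_fps_shift_Suc:
  fixes F :: "'a :: {banach, real_normed_field} fps"
  assumes "ereal (norm w) < fps_conv_radius F"
  shows "eval_fps (fps_shift n F) w = fps_nth F n + w * eval_fps (fps_shift (Suc n) F) w"
proof -
  have "(\<lambda>k. fps_nth F (k + Suc n) * w ^ k) sums eval_fps (fps_shift (Suc n) F) w"
    using sums_eval_fps[of w "fps_shift (Suc n) F"] assms by simp
  then have "(\<lambda>k. fps_nth F (Suc k + n) * w ^ Suc k) sums (w * eval_fps (fps_shift (Suc n) F) w)"
    by (auto dest: sums_mult[of _ _ w] simp: mult_ac)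
  then have "(\<lambda>k. fps_nth F (k + n) * w ^ k) sums (fps_nth F n + w * eval_fps (fps_shift (Suc n) F) w)"
    by (subst (asm) sums_Suc_iff) (simp add: add.commute)
  moreover have "(\<lambda>k. fps_nth F (k + n) * w ^ k) sums eval_fps (fps_shift n F) w"
    using sums_eval_fps[of w "fps_shift n F"] assms by simp
  ultimately show ?thesis
    by (rule sums_unique2[symmetric])
qed

(* The library's Schwarz lemma needs |omega| < 1, so it is applied to t * omega for t < 1. *)
lemma Schwarz_norm_le:
  assumes hol: "\<omega> holomorphic_on ball 0 1" and \<omega>0: "\<omega> 0 = 0"
    and bd: "\<And>z. z \<in> ball 0 1 \<Longrightarrow> norm (\<omega> z) \<le> 1" and z: "norm z < 1"
  shows "norm (\<omega> z) \<le> norm z"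
proof (rule field_le_mult_one_interval)
  fix t :: real
  assume t: "0 < t" "t < 1"
  have "norm (of_real t * \<omega> z) \<le> norm z"
  proof (rule Schwarz_Lemma(1)[where f = "\<lambda>z. of_real t * \<omega> z"])
    fix w :: complex
    assume "norm w < 1"
    then have "t * norm (\<omega> w) \<le> t"
      using bd t by (intro mult_left_le) auto
    with t have "t * norm (\<omega> w) < 1"
      by linarith
    then show "norm (of_real t * \<omega> w) < 1"
      using t by (simp add: norm_mult)
  qed (use z \<omega>0 in \<open>auto intro!: holomorphic_intros hol\<close>)
  then show "t * norm (\<omega> z) \<le> norm z"
    using t by (simp add: norm_mult)
qed

section \<open>Wiener's and Bohr's inequalities\<close>

lemma norm_diff_le_norm_1_minus_cnj_mult:
  fixes u a :: complex
  assumes "norm u \<le> 1" "norm a \<le> 1"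
  shows "norm (u - a) \<le> norm (1 - cnj a * u)"
proof (rule power2_le_imp_le)
  have "(norm (1 - cnj a * u))\<^sup>2 - (norm (u - a))\<^sup>2 = (1 - (norm a)\<^sup>2) * (1 - (norm u)\<^sup>2)"
    unfolding cmod_power2 by (simp add: power2_eq_square algebra_simps)
  also have "\<dots> \<ge> 0"
    using assms by (intro mult_nonneg_nonneg) (auto simp: power_le_one)
  finally show "(norm (u - a))\<^sup>2 \<le> (norm (1 - cnj a * u))\<^sup>2"
    by simp
qed simp

lemma sum_powers_root_unity:
  assumes n: "n > 0"
  defines "\<epsilon> \<equiv> exp (2 * of_real pi * \<i> / of_nat n)"
  shows "(\<Sum>k<n. (\<epsilon> ^ k) ^ j) = (if n dvd j then of_nat n else 0)"
proof -
  have \<epsilon>j: "\<epsilon> ^ j = exp (2 * of_real pi * \<i> * of_nat j / of_nat n)"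
    unfolding \<epsilon>_def exp_of_nat_mult[symmetric] by (simp add: mult_ac)
  have "(\<Sum>k<n. (\<epsilon> ^ k) ^ j) = (\<Sum>k<n. (\<epsilon> ^ j) ^ k)"
    by (simp add: power_mult[symmetric] mult.commute)
  also have "\<dots> = (if n dvd j then of_nat n else 0)"
  proof (cases "n dvd j")
    case True
    then show ?thesis
      using complex_root_unity_eq_1[of n j] n by (simp add: \<epsilon>j)
  next
    case False
    then have "\<epsilon> ^ j \<noteq> 1"
      using complex_root_unity_eq_1[of n j] n by (simp add: \<epsilon>j)
    moreover have "(\<epsilon> ^ j) ^ n = 1"
      using complex_root_unity[of n j] n by (simp add: \<epsilon>j)
    ultimately show ?thesis
      using False by (simp add: geometric_sum)
  qed
  finally show ?thesis .
qed

lemma has_fps_expansion_rotation: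
  assumes "h holomorphic_on ball 0 1"
  shows "(\<lambda>z. h (c * z)) has_fps_expansion Abs_fps (\<lambda>j. c ^ j * taylor_coeff h j)"
proof -
  have "(h \<circ> (\<lambda>z. c * z)) has_fps_expansion (fps_expansion h 0 oo (fps_const c * fps_X))"
    by (rule has_fps_expansion_compose)
      (auto intro!: fps_expansion_intros has_fps_expansion_unit_disc assms)
  then show ?thesis
    by (simp add: fps_compose_linear o_def taylor_coeff_eq_fps_nth)
qed

lemma taylor_coeff_rotation_average:
  assumes hol: "h holomorphic_on ball 0 1" and n: "n > 0"
  defines "\<epsilon> \<equiv> exp (2 * of_real pi * \<i> / of_nat n)"
  shows "taylor_coeff (\<lambda>z. (\<Sum>k<n. h (\<epsilon> ^ k * z)) / of_nat n) j
           = (if n dvd j then taylor_coeff h j else 0)"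
proof -
  have "(\<lambda>z. (\<Sum>k<n. h (\<epsilon> ^ k * z)) / of_nat n) has_fps_expansion
          (\<Sum>k<n. Abs_fps (\<lambda>j. (\<epsilon> ^ k) ^ j * taylor_coeff h j)) / fps_const (of_nat n)"
    using n by (intro fps_expansion_intros has_fps_expansion_rotation hol) simp
  then have "taylor_coeff (\<lambda>z. (\<Sum>k<n. h (\<epsilon> ^ k * z)) / of_nat n) j
               = fps_nth ((\<Sum>k<n. Abs_fps (\<lambda>j. (\<epsilon> ^ k) ^ j * taylor_coeff h j)) / fps_const (of_nat n)) j"
    by (simp add: taylor_coeff_eq_fps_nth fps_expansion_eqI)
  also have "\<dots> = (\<Sum>k<n. (\<epsilon> ^ k) ^ j) * taylor_coeff h j / of_nat n"
    by (simp add: fps_sum_nth sum_distrib_left sum_distrib_right divide_inverse mult_ac)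
  finally show ?thesis
    using n by (simp add: sum_powers_root_unity \<epsilon>_def)
qed

lemma Moebius_compose_unit_disc:
  assumes hol: "u holomorphic_on ball 0 1" and bd: "\<And>z. z \<in> ball 0 1 \<Longrightarrow> norm (u z) \<le> 1"
    and a: "norm a < 1"
  defines "\<psi> \<equiv> \<lambda>z. (u z - a) / (1 - cnj a * u z)"
  shows "\<psi> holomorphic_on ball 0 1" and "\<And>z. z \<in> ball 0 1 \<Longrightarrow> norm (\<psi> z) \<le> 1"
    and "fps_expansion \<psi> 0 * (1 - fps_const (cnj a) * fps_expansion u 0) = fps_expansion u 0 - fps_const a"
proof -
  have den: "1 - cnj a * u z \<noteq> 0" if "z \<in> ball 0 1" for z
  proof -
    have "norm (cnj a * u z) \<le> norm a"
      using bd[OF that] by (simp add: norm_mult mult_left_le)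
    then show ?thesis
      using a by auto
  qed
  show \<psi>_hol: "\<psi> holomorphic_on ball 0 1"
    unfolding \<psi>_def by (intro holomorphic_intros hol den)
  show "norm (\<psi> z) \<le> 1" if "z \<in> ball 0 1" for z
    using norm_diff_le_norm_1_minus_cnj_mult[of "u z" a] bd[OF that] a den[OF that]
    by (simp add: \<psi>_def norm_divide divide_le_eq_1)
  have "eventually (\<lambda>z. z \<in> ball 0 1) (nhds (0::complex))"
    by (intro eventually_nhds_in_open) auto
  then have "eventually (\<lambda>z. \<psi> z * (1 - cnj a * u z) = u z - a) (nhds 0)"
    by eventually_elim (use den in \<open>simp add: \<psi>_def\<close>)
  moreover have "(\<lambda>z. \<psi> z * (1 - cnj a * u z)) has_fps_expansion
                   fps_expansion \<psi> 0 * (1 - fps_const (cnj a) * fps_expansion u 0)"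
    by (intro fps_expansion_intros has_fps_expansion_unit_disc \<psi>_hol hol)
  ultimately have "(\<lambda>z. u z - a) has_fps_expansion fps_expansion \<psi> 0 * (1 - fps_const (cnj a) * fps_expansion u 0)"
    by (rule has_fps_expansion_cong[THEN iffD1, OF _ refl])
  moreover have "(\<lambda>z. u z - a) has_fps_expansion fps_expansion u 0 - fps_const a"
    by (intro fps_expansion_intros has_fps_expansion_unit_disc hol)
  ultimately show "fps_expansion \<psi> 0 * (1 - fps_const (cnj a) * fps_expansion u 0) = fps_expansion u 0 - fps_const a"
    using fps_expansion_unique_complex by blast
qed

lemma fps_nth_mult_of_gap:
  fixes A B :: "'a :: comm_ring_1 fps"
  assumes "fps_nth A 0 = 0" and "\<And>j. 0 < j \<Longrightarrow> j < n \<Longrightarrow> fps_nth B j = 0"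
  shows "fps_nth (A * B) n = fps_nth A n * fps_nth B 0"
proof -
  have "fps_nth (A * B) n = (\<Sum>i\<in>{n}. fps_nth A i * fps_nth B (n - i))"
    unfolding fps_mult_nth
  proof (rule sum.mono_neutral_right)
    show "\<forall>i\<in>{0..n} - {n}. fps_nth A i * fps_nth B (n - i) = 0"
    proof
      fix i
      assume "i \<in> {0..n} - {n}"
      then consider "i = 0" | "0 < n - i" "n - i < n"
        by fastforce
      then show "fps_nth A i * fps_nth B (n - i) = 0"
        by cases (use assms in auto)
    qed
  qed auto
  then show ?thesis
    by simp
qed

lemma norm_first_taylor_coeff_le:
  assumes hol: "u holomorphic_on ball 0 1" and bd: "\<And>z. z \<in> ball 0 1 \<Longrightarrow> norm (u z) \<le> 1"
    and a: "norm (u 0) < 1" and n: "n > 0"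
    and gap: "\<And>j. 0 < j \<Longrightarrow> j < n \<Longrightarrow> taylor_coeff u j = 0"
  shows "norm (taylor_coeff u n) \<le> 1 - (norm (u 0))\<^sup>2"
proof -
  define a where "a = u 0"
  define U where "U = fps_expansion u 0"
  define \<psi> where "\<psi> = (\<lambda>z. (u z - a) / (1 - cnj a * u z))"
  define \<Psi> where "\<Psi> = fps_expansion \<psi> 0"
  note Moebius = Moebius_compose_unit_disc[OF hol bd a]
  have "fps_nth U n = fps_nth (U - fps_const a) n"
    using n by simp
  also have "U - fps_const a = \<Psi> * (1 - fps_const (cnj a) * U)"
    using Moebius(3) unfolding \<Psi>_def \<psi>_def U_def a_def by simp
  also have "fps_nth \<dots> n = fps_nth \<Psi> n * (1 - cnj a * a)"
    using gap by (subst fps_nth_mult_of_gap)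
      (simp_all add: \<Psi>_def \<psi>_def U_def a_def fps_expansion_def taylor_coeff_eq_fps_nth)
  also have "cnj a * a = of_real ((norm a)\<^sup>2)"
    by (metis complex_norm_square mult.commute)
  finally have U_n: "fps_nth U n = fps_nth \<Psi> n * of_real (1 - (norm a)\<^sup>2)"
    by simp
  have "norm (taylor_coeff \<psi> n) \<le> 1"
    unfolding \<psi>_def a_def by (rule norm_taylor_coeff_le[OF Moebius(1,2)])
  then have \<Psi>_n: "norm (fps_nth \<Psi> n) \<le> 1"
    by (simp add: taylor_coeff_eq_fps_nth \<Psi>_def)
  have "(norm a)\<^sup>2 \<le> 1"
    using a by (simp add: a_def power_le_one)
  then have "norm (fps_nth U n) = norm (fps_nth \<Psi> n) * (1 - (norm a)\<^sup>2)"
    unfolding U_n norm_mult norm_of_real by simp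
  also have "\<dots> \<le> 1 - (norm a)\<^sup>2"
    using \<Psi>_n \<open>(norm a)\<^sup>2 \<le> 1\<close> by (simp add: mult_left_le_one_le)
  finally show ?thesis
    by (simp add: U_def a_def taylor_coeff_eq_fps_nth)
qed

(* Averaging h over the rotations by n-th roots of unity keeps h 0 and the n-th coefficient
   and kills the coefficients 1, ..., n - 1. *)
lemma Wiener_inequality_strict:
  assumes hol: "h holomorphic_on ball 0 1" and bd: "\<And>z. z \<in> ball 0 1 \<Longrightarrow> norm (h z) \<le> 1"
    and h0: "norm (h 0) < 1" and n: "n > 0"
  shows "norm (taylor_coeff h n) \<le> 1 - (norm (h 0))\<^sup>2"
proof -
  define \<epsilon> where "\<epsilon> = exp (2 * of_real pi * \<i> / of_nat n)"
  define u where "u = (\<lambda>z. (\<Sum>k<n. h (\<epsilon> ^ k * z)) / of_nat n)"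
  have norm_\<epsilon>: "norm (\<epsilon> ^ k) = 1" for k
    by (simp add: \<epsilon>_def norm_power)
  have taylor_u: "taylor_coeff u j = (if n dvd j then taylor_coeff h j else 0)" for j
    unfolding u_def \<epsilon>_def by (rule taylor_coeff_rotation_average[OF hol n])
  have "(\<lambda>z. h (\<epsilon> ^ k * z)) holomorphic_on ball 0 1" for k
  proof -
    have "(\<lambda>z. \<epsilon> ^ k * z) ` ball 0 1 \<subseteq> ball 0 1"
      by (auto simp: norm_mult norm_\<epsilon>)
    then show ?thesis
      using holomorphic_on_compose_gen[OF _ hol, of "\<lambda>z. \<epsilon> ^ k * z" "ball 0 1"]
      by (auto intro: holomorphic_intros simp: o_def)
  qed
  then have u_hol: "u holomorphic_on ball 0 1"
    unfolding u_def using n by (intro holomorphic_intros) auto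
  have u_bd: "norm (u z) \<le> 1" if "z \<in> ball 0 1" for z
  proof -
    have "norm (\<Sum>k<n. h (\<epsilon> ^ k * z)) \<le> (\<Sum>k<n. 1)"
      using that by (intro sum_norm_le bd) (simp add: norm_mult norm_\<epsilon>)
    then show ?thesis
      using n by (simp add: u_def norm_divide field_simps)
  qed
  have u0: "u 0 = h 0"
    using n by (simp add: u_def)
  have "norm (taylor_coeff u n) \<le> 1 - (norm (u 0))\<^sup>2"
    by (rule norm_first_taylor_coeff_le[OF u_hol u_bd]) (use h0 u0 n taylor_u in auto)
  then show ?thesis
    by (simp add: taylor_u u0)
qed

lemma Wiener_inequality:
  assumes hol: "h holomorphic_on ball 0 1" and bd: "\<And>z. z \<in> ball 0 1 \<Longrightarrow> norm (h z) \<le> 1"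
    and n: "n > 0"
  shows "norm (taylor_coeff h n) \<le> 1 - (norm (h 0))\<^sup>2"
proof -
  have scaled: "t\<^sup>2 * (norm (taylor_coeff h n) + (norm (h 0))\<^sup>2) \<le> 1" if t: "0 < t" "t < 1" for t :: real
  proof -
    have th_hol: "(\<lambda>z. of_real t * h z) holomorphic_on ball 0 1"
      by (intro holomorphic_intros hol)
    have th_bd: "norm (of_real t * h z) \<le> t" if "z \<in> ball 0 1" for z
      using bd[OF that] t by (simp add: norm_mult mult_left_le)
    have "norm (taylor_coeff (\<lambda>z. of_real t * h z) n) \<le> 1 - (norm (of_real t * h 0))\<^sup>2"
    proof (rule Wiener_inequality_strict[OF th_hol _ _ n])
      show "norm (of_real t * h z) \<le> 1" if "z \<in> ball 0 1" for z
        using th_bd[OF that] t by linarith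
      show "norm (of_real t * h 0) < 1"
        using le_less_trans[OF th_bd \<open>t < 1\<close>, of 0] by simp
    qed
    then have "t * norm (taylor_coeff h n) + t\<^sup>2 * (norm (h 0))\<^sup>2 \<le> 1"
      using t by (simp add: taylor_coeff_cmult[OF hol] norm_mult power_mult_distrib)
    moreover have "t\<^sup>2 * norm (taylor_coeff h n) \<le> t * norm (taylor_coeff h n)"
      using t by (intro mult_right_mono) (auto simp: power2_eq_square)
    ultimately show ?thesis
      by (simp add: algebra_simps)
  qed
  have "norm (taylor_coeff h n) + (norm (h 0))\<^sup>2 \<le> 1"
  proof (rule field_le_mult_one_interval)
    fix s :: real
    assume "0 < s" "s < 1"
    then show "s * (norm (taylor_coeff h n) + (norm (h 0))\<^sup>2) \<le> 1"
      using scaled[of "sqrt s"] by simp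
  qed
  then show ?thesis
    by simp
qed

lemma Bohr_inequality:
  assumes hol: "h holomorphic_on ball 0 1" and bd: "\<And>z. z \<in> ball 0 1 \<Longrightarrow> norm (h z) \<le> 1"
    and r: "0 \<le> r" "r \<le> 1/3"
  shows "(\<Sum>n. norm (taylor_coeff h n) * r ^ n) \<le> 1"
proof -
  define a where "a = norm (h 0)"
  have a: "0 \<le> a" "a \<le> 1"
    using bd[of 0] by (auto simp: a_def)
  have r1: "norm r < 1"
    using r by simp
  have summ: "summable (\<lambda>n. norm (taylor_coeff h n) * r ^ n)"
    using r by (intro summable_norm_taylor_coeff hol) auto
  have geom: "(\<lambda>n. (1 - a\<^sup>2) * r ^ Suc n) sums ((1 - a\<^sup>2) * (r / (1 - r)))"
    using sums_mult[OF geometric_sums[OF r1], of r] by (intro sums_mult) simp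
  have "(\<Sum>n. norm (taylor_coeff h (Suc n)) * r ^ Suc n) \<le> (1 - a\<^sup>2) * (r / (1 - r))"
  proof (rule sums_le[OF _ summable_sums geom])
    show "norm (taylor_coeff h (Suc n)) * r ^ Suc n \<le> (1 - a\<^sup>2) * r ^ Suc n" for n
      unfolding a_def using Wiener_inequality[OF hol bd] r by (intro mult_right_mono) auto
  qed (use summable_ignore_initial_segment[OF summ, of 1] in simp)
  moreover have "(\<Sum>n. norm (taylor_coeff h n) * r ^ n) = a + (\<Sum>n. norm (taylor_coeff h (Suc n)) * r ^ Suc n)"
    using suminf_split_head[OF summ] by (simp add: a_def)
  moreover have "(1 - a\<^sup>2) * (r / (1 - r)) \<le> (1 - a\<^sup>2) * (1 / 2)"
    using r a by (intro mult_left_mono) (auto simp: field_simps power_le_one)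
  moreover have "a + (1 - a\<^sup>2) * (1 / 2) \<le> 1"
    using zero_le_power2[of "1 - a"] by (simp add: power2_eq_square field_simps)
  ultimately show ?thesis
    by linarith
qed

section \<open>Majorant series\<close>

definition fps_majorant :: "complex fps \<Rightarrow> real fps" where
  "fps_majorant F = Abs_fps (\<lambda>n. norm (fps_nth F n))"

lemma fps_nth_majorant [simp]: "fps_nth (fps_majorant F) n = norm (fps_nth F n)"
  by (simp add: fps_majorant_def)

lemma fps_conv_radius_majorant [simp]: "fps_conv_radius (fps_majorant F) = fps_conv_radius F"
  by (simp add: fps_majorant_def)

lemma eval_fps_majorant: "eval_fps (fps_majorant F) r = (\<Sum>n. norm (fps_nth F n) * r ^ n)"
  by (simp add: eval_fps_def)

lemma eval_fps_majorant_nonneg: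
  assumes "0 \<le> r" "ereal r < fps_conv_radius F"
  shows "0 \<le> eval_fps (fps_majorant F) r"
  unfolding eval_fps_def using assms summable_fps[of r "fps_majorant F"]
  by (intro suminf_nonneg) auto

lemma norm_eval_fps_le_majorant:
  assumes "ereal r < fps_conv_radius F" "norm z \<le> r"
  shows "norm (eval_fps F z) \<le> eval_fps (fps_majorant F) r"
proof -
  have z: "norm z < fps_conv_radius F"
    using assms by (meson ereal_less_eq(3) le_less_trans)
  have r: "norm r < fps_conv_radius (fps_majorant F)"
    using assms by (simp add: abs_of_nonneg order.trans[OF norm_ge_zero])
  have "norm (eval_fps F z) \<le> (\<Sum>n. norm (fps_nth F n * z ^ n))"
    unfolding eval_fps_def by (rule summable_norm[OF norm_summable_fps[OF z]])
  also have "\<dots> \<le> eval_fps (fps_majorant F) r"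
    unfolding eval_fps_def
    by (intro suminf_le norm_summable_fps z summable_fps r)
      (simp add: norm_mult norm_power mult_left_mono power_mono assms)
  finally show ?thesis .
qed

lemma fps_nth_power_majorant_nonneg: "0 \<le> fps_nth (fps_majorant W ^ i) k"
  by (induction i arbitrary: k) (auto simp: fps_mult_nth intro!: sum_nonneg)

lemma norm_fps_nth_mult_le_majorant:
  "norm (fps_nth (A * B) n) \<le> fps_nth (fps_majorant A * fps_majorant B) n"
  unfolding fps_mult_nth
  using norm_sum[of "\<lambda>i. fps_nth A i * fps_nth B (n - i)" "{0..n}"] by (simp add: norm_mult)

lemma norm_fps_nth_power_le_majorant: "norm (fps_nth (W ^ i) k) \<le> fps_nth (fps_majorant W ^ i) k"
proof (induction i arbitrary: k)
  case (Suc i)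
  have "norm (fps_nth (W ^ Suc i) k) \<le> (\<Sum>j=0..k. norm (fps_nth W j) * norm (fps_nth (W ^ i) (k - j)))"
    unfolding power_Suc fps_mult_nth
    using norm_sum[of "\<lambda>j. fps_nth W j * fps_nth (W ^ i) (k - j)" "{0..k}"] by (simp add: norm_mult)
  also have "\<dots> \<le> (\<Sum>j=0..k. norm (fps_nth W j) * fps_nth (fps_majorant W ^ i) (k - j))"
    by (intro sum_mono mult_left_mono Suc.IH) simp
  finally show ?case
    by (simp add: fps_mult_nth)
qed simp

lemma eval_fps_majorant_mult_le:
  assumes r: "0 \<le> r" and A: "ereal r < fps_conv_radius A" and B: "ereal r < fps_conv_radius B"
  shows "eval_fps (fps_majorant (A * B)) r \<le> eval_fps (fps_majorant A) r * eval_fps (fps_majorant B) r"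
proof -
  have rA: "norm r < fps_conv_radius (fps_majorant A)" and rB: "norm r < fps_conv_radius (fps_majorant B)"
    using r A B by simp_all
  have "ereal r < min (fps_conv_radius A) (fps_conv_radius B)"
    using A B by simp
  then have "ereal r < fps_conv_radius (A * B)"
    using fps_conv_radius_mult[of A B] by (rule less_le_trans)
  then have AB: "norm r < fps_conv_radius (fps_majorant (A * B))"
    using r by simp
  have AB': "norm r < fps_conv_radius (fps_majorant A * fps_majorant B)"
  proof -
    have "ereal (norm r) < min (fps_conv_radius (fps_majorant A)) (fps_conv_radius (fps_majorant B))"
      using rA rB by simp
    then show ?thesis
      using fps_conv_radius_mult[of "fps_majorant A" "fps_majorant B"] by (rule less_le_trans)
  qed
  have "eval_fps (fps_majorant (A * B)) r \<le> eval_fps (fps_majorant A * fps_majorant B) r"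
    unfolding eval_fps_def
  proof (rule suminf_le[OF _ summable_fps[OF AB] summable_fps[OF AB']])
    show "fps_nth (fps_majorant (A * B)) n * r ^ n \<le> fps_nth (fps_majorant A * fps_majorant B) n * r ^ n" for n
      using r norm_fps_nth_mult_le_majorant[of A B n] by (simp add: mult_right_mono)
  qed
  also have "\<dots> = eval_fps (fps_majorant A) r * eval_fps (fps_majorant B) r"
    by (rule eval_fps_mult[OF rA rB])
  finally show ?thesis .
qed

lemma norm_fps_nth_compose_le_majorant:
  "norm (fps_nth (G oo W) k) \<le> (\<Sum>i=0..k. norm (fps_nth G i) * fps_nth (fps_majorant W ^ i) k)"
proof -
  have "norm (fps_nth (G oo W) k) \<le> (\<Sum>i=0..k. norm (fps_nth G i) * norm (fps_nth (W ^ i) k))"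
    unfolding fps_compose_nth
    using norm_sum[of "\<lambda>i. fps_nth G i * fps_nth (W ^ i) k" "{0..k}"] by (simp add: norm_mult)
  also have "\<dots> \<le> (\<Sum>i=0..k. norm (fps_nth G i) * fps_nth (fps_majorant W ^ i) k)"
    by (intro sum_mono mult_left_mono norm_fps_nth_power_le_majorant) simp
  finally show ?thesis .
qed

lemma sum_majorant_power_le:
  assumes r: "0 \<le> r" and W: "ereal r < fps_conv_radius W" "eval_fps (fps_majorant W) r \<le> r"
  shows "(\<Sum>k<N. fps_nth (fps_majorant W ^ i) k * r ^ k) \<le> r ^ i"
proof -
  have "norm r < fps_conv_radius (fps_majorant W ^ i)"
    using W r fps_conv_radius_power[of "fps_majorant W" i] by (simp add: less_le_trans)
  then have "(\<Sum>k<N. fps_nth (fps_majorant W ^ i) k * r ^ k) \<le> eval_fps (fps_majorant W ^ i) r"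
    unfolding eval_fps_def using r
    by (intro sum_le_suminf summable_fps) (simp_all add: fps_nth_power_majorant_nonneg)
  also have "\<dots> = (eval_fps (fps_majorant W) r) ^ i"
    using W r by (intro eval_fps_power) simp
  also have "\<dots> \<le> r ^ i"
    using W r by (intro power_mono eval_fps_majorant_nonneg) auto
  finally show ?thesis .
qed

lemma eval_fps_majorant_compose_le:
  assumes r: "0 \<le> r" and W: "ereal r < fps_conv_radius W" "eval_fps (fps_majorant W) r \<le> r"
    and G: "summable (\<lambda>n. norm (fps_nth G n) * r ^ n)"
  shows "summable (\<lambda>n. norm (fps_nth (G oo W) n) * r ^ n)"
    and "eval_fps (fps_majorant (G oo W)) r \<le> eval_fps (fps_majorant G) r"
proof -
  define P where "P = (\<lambda>i k. norm (fps_nth G i) * (fps_nth (fps_majorant W ^ i) k * r ^ k))"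
  have partial: "(\<Sum>k<N. norm (fps_nth (G oo W) k) * r ^ k) \<le> eval_fps (fps_majorant G) r" for N
  proof -
    have "norm (fps_nth (G oo W) k) * r ^ k \<le> (\<Sum>i<N. P i k)" if "k < N" for k
    proof -
      have "(\<Sum>i=0..k. norm (fps_nth G i) * fps_nth (fps_majorant W ^ i) k)
              \<le> (\<Sum>i<N. norm (fps_nth G i) * fps_nth (fps_majorant W ^ i) k)"
        using that by (intro sum_mono2) (auto simp: fps_nth_power_majorant_nonneg)
      then have "norm (fps_nth (G oo W) k) * r ^ k
                   \<le> (\<Sum>i<N. norm (fps_nth G i) * fps_nth (fps_majorant W ^ i) k) * r ^ k"
        using r norm_fps_nth_compose_le_majorant[of G W k] by (intro mult_right_mono) simp_all
      then show ?thesis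
        by (simp add: P_def sum_distrib_right mult.assoc)
    qed
    then have "(\<Sum>k<N. norm (fps_nth (G oo W) k) * r ^ k) \<le> (\<Sum>k<N. \<Sum>i<N. P i k)"
      by (intro sum_mono) simp
    also have "\<dots> = (\<Sum>i<N. norm (fps_nth G i) * (\<Sum>k<N. fps_nth (fps_majorant W ^ i) k * r ^ k))"
      by (subst sum.swap) (simp add: P_def sum_distrib_left)
    also have "\<dots> \<le> (\<Sum>i<N. norm (fps_nth G i) * r ^ i)"
      by (intro sum_mono mult_left_mono sum_majorant_power_le r W) simp
    also have "\<dots> \<le> eval_fps (fps_majorant G) r"
      unfolding eval_fps_majorant using r by (intro sum_le_suminf G) auto
    finally show ?thesis .
  qed
  show summ: "summable (\<lambda>n. norm (fps_nth (G oo W) n) * r ^ n)"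
  proof (rule bounded_imp_summable)
    show "(\<Sum>k\<le>n. norm (fps_nth (G oo W) k) * r ^ k) \<le> eval_fps (fps_majorant G) r" for n
      using partial[of "Suc n"] unfolding lessThan_Suc_atMost .
  qed (use r in simp)
  show "eval_fps (fps_majorant (G oo W)) r \<le> eval_fps (fps_majorant G) r"
    unfolding eval_fps_majorant[of "G oo W"] using suminf_le_const[OF summ partial] .
qed

lemma eval_fps_majorant_Schwarz_le:
  assumes hol: "\<omega> holomorphic_on ball 0 1" and \<omega>0: "\<omega> 0 = 0"
    and bd: "\<And>z. z \<in> ball 0 1 \<Longrightarrow> norm (\<omega> z) \<le> 1" and r: "0 \<le> r" "r \<le> 1/3"
  shows "eval_fps (fps_majorant (fps_expansion \<omega> 0)) r \<le> r"
proof -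
  define W where "W = fps_expansion \<omega> 0"
  define \<sigma> where "\<sigma> = eval_fps (fps_shift 1 W)"
  have W: "1 \<le> fps_conv_radius W"
    unfolding W_def by (rule fps_conv_radius_expansion_unit_disc[OF hol])
  have \<sigma>_hol: "\<sigma> holomorphic_on ball 0 1"
    unfolding \<sigma>_def using norm_less_fps_conv_radius[OF W]
    by (intro holomorphic_on_eval_fps) auto
  have \<sigma>_expansion: "fps_expansion \<sigma> 0 = fps_shift 1 W"
    unfolding \<sigma>_def using norm_less_fps_conv_radius[OF W, of "0::complex"]
    by (intro fps_expansion_eqI eval_fps_has_fps_expansion) (simp add: zero_ereal_def)
  \<comment> \<open>\<open>\<omega> = z \<sigma>\<close>, so Schwarz's lemma bounds \<open>\<sigma>\<close> and Bohr's inequality applies to it.\<close>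
  have \<omega>_eq: "\<omega> z = z * \<sigma> z" if "norm z < 1" for z
    using eval_fps_shift_Suc[OF norm_less_fps_conv_radius[OF W that], of 0] that
      eval_fps_expansion_unit_disc[OF hol that] \<omega>0
    by (simp add: \<sigma>_def W_def fps_expansion_def)
  have \<sigma>_bd': "norm (\<sigma> z) \<le> 1" if "z \<in> ball 0 1" "z \<noteq> 0" for z
    using Schwarz_norm_le[OF hol \<omega>0 bd, of z] \<omega>_eq[of z] that by (simp add: norm_mult)
  have \<sigma>_bd: "norm (\<sigma> z) \<le> 1" if "z \<in> ball 0 1" for z
  proof (cases "z = 0")
    case True
    then show ?thesis
      using norm_taylor_coeff_le[OF \<sigma>_hol \<sigma>_bd', of 0] by simp
  qed (use \<sigma>_bd' that in auto)
  have "eval_fps (fps_majorant W) r = (\<Sum>n. norm (fps_nth W (Suc n)) * r ^ Suc n)"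
    unfolding eval_fps_majorant using suminf_split_head[OF summable_norm_taylor_coeff[OF hol r(1)]] r
    by (simp add: W_def taylor_coeff_eq_fps_nth fps_expansion_def \<omega>0)
  also have "\<dots> = r * (\<Sum>n. norm (taylor_coeff \<sigma> n) * r ^ n)"
    using suminf_mult[OF summable_norm_taylor_coeff[OF \<sigma>_hol r(1)], of r] r
    by (simp add: taylor_coeff_eq_fps_nth \<sigma>_expansion mult_ac)
  also have "\<dots> \<le> r * 1"
    using Bohr_inequality[OF \<sigma>_hol \<sigma>_bd r] r by (intro mult_left_mono)
  finally show ?thesis
    by (simp add: W_def)
qed

lemma compose_Schwarz_function:
  assumes g_hol: "g holomorphic_on ball 0 1" and \<omega>_hol: "\<omega> holomorphic_on ball 0 1"
    and \<omega>0: "\<omega> 0 = 0" and \<omega>_bd: "\<And>z. z \<in> ball 0 1 \<Longrightarrow> norm (\<omega> z) \<le> 1"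
  shows "(g \<circ> \<omega>) holomorphic_on ball 0 1"
    and "(g \<circ> \<omega>) has_fps_expansion (fps_expansion g 0 oo fps_expansion \<omega> 0)"
proof -
  have "\<omega> ` ball 0 1 \<subseteq> ball 0 1"
    using Schwarz_norm_le[OF \<omega>_hol \<omega>0 \<omega>_bd] by fastforce
  then show "(g \<circ> \<omega>) holomorphic_on ball 0 1"
    by (rule holomorphic_on_compose_gen[OF \<omega>_hol g_hol])
  show "(g \<circ> \<omega>) has_fps_expansion (fps_expansion g 0 oo fps_expansion \<omega> 0)"
    using \<omega>0 by (intro has_fps_expansion_compose has_fps_expansion_unit_disc g_hol \<omega>_hol)
      (simp add: fps_expansion_def)
qed

lemma majorant_quasi_subordinate_le:
  assumes f_hol: "f holomorphic_on ball 0 1" and g_hol: "g holomorphic_on ball 0 1"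
    and \<Phi>_hol: "\<Phi> holomorphic_on ball 0 1" and \<omega>_hol: "\<omega> holomorphic_on ball 0 1"
    and \<omega>0: "\<omega> 0 = 0" and \<omega>_bd: "\<And>z. z \<in> ball 0 1 \<Longrightarrow> norm (\<omega> z) \<le> 1"
    and \<Phi>_bd: "\<And>z. z \<in> ball 0 1 \<Longrightarrow> norm (\<Phi> z) \<le> 1"
    and quasi: "\<And>z. z \<in> ball 0 1 \<Longrightarrow> f z = \<Phi> z * g (\<omega> z)"
    and r: "0 \<le> r" "r \<le> 1/3"
  shows "(\<Sum>n. norm (taylor_coeff f n) * r ^ n) \<le> (\<Sum>n. norm (taylor_coeff g n) * r ^ n)"
proof -
  define P where "P = fps_expansion \<Phi> 0"
  define G where "G = fps_expansion g 0"
  define W where "W = fps_expansion \<omega> 0"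
  note gw = compose_Schwarz_function[OF g_hol \<omega>_hol \<omega>0 \<omega>_bd]
  have GW: "fps_expansion (g \<circ> \<omega>) 0 = G oo W"
    unfolding G_def W_def using gw(2) by (rule fps_expansion_eqI)
  have r_less: "ereal r < fps_conv_radius (fps_expansion h 0)" if "h holomorphic_on ball 0 1" for h
    using norm_less_fps_conv_radius[OF fps_conv_radius_expansion_unit_disc[OF that], of r] r by simp
  have "eventually (\<lambda>z. z \<in> ball 0 1) (nhds (0::complex))"
    by (intro eventually_nhds_in_open) auto
  then have "eventually (\<lambda>z. \<Phi> z * (g \<circ> \<omega>) z = f z) (nhds 0)"
    by eventually_elim (simp add: quasi)
  moreover have "(\<lambda>z. \<Phi> z * (g \<circ> \<omega>) z) has_fps_expansion P * (G oo W)"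
    unfolding P_def G_def W_def by (intro has_fps_expansion_mult has_fps_expansion_unit_disc \<Phi>_hol gw(2))
  ultimately have "f has_fps_expansion P * (G oo W)"
    by (rule has_fps_expansion_cong[THEN iffD1, OF _ refl])
  then have "(\<Sum>n. norm (taylor_coeff f n) * r ^ n) = eval_fps (fps_majorant (P * (G oo W))) r"
    by (simp add: eval_fps_majorant taylor_coeff_eq_fps_nth fps_expansion_eqI)
  also have "\<dots> \<le> eval_fps (fps_majorant P) r * eval_fps (fps_majorant (G oo W)) r"
    using r_less[OF \<Phi>_hol] r_less[OF gw(1)] r
    by (intro eval_fps_majorant_mult_le) (simp_all add: P_def GW)
  also have "\<dots> \<le> 1 * eval_fps (fps_majorant G) r"
  proof (rule mult_mono)
    show "eval_fps (fps_majorant P) r \<le> 1"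
      using Bohr_inequality[OF \<Phi>_hol \<Phi>_bd r] by (simp add: P_def eval_fps_majorant taylor_coeff_eq_fps_nth)
    show "eval_fps (fps_majorant (G oo W)) r \<le> eval_fps (fps_majorant G) r"
      using r r_less[OF \<omega>_hol] eval_fps_majorant_Schwarz_le[OF \<omega>_hol \<omega>0 \<omega>_bd r]
        summable_norm_taylor_coeff[OF g_hol r(1)]
      by (intro eval_fps_majorant_compose_le) (simp_all add: G_def W_def taylor_coeff_eq_fps_nth)
    show "0 \<le> eval_fps (fps_majorant (G oo W)) r"
      using r r_less[OF gw(1)] by (intro eval_fps_majorant_nonneg) (simp_all add: GW)
  qed simp
  finally show ?thesis
    by (simp add: G_def eval_fps_majorant taylor_coeff_eq_fps_nth)
qed

section \<open>Parseval's identity\<close>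

definition taylor_sqsum :: "real \<Rightarrow> (complex \<Rightarrow> complex) \<Rightarrow> real" where
  "taylor_sqsum r h = (\<Sum>n. (norm (taylor_coeff h n))\<^sup>2 * r ^ (2 * n))"

lemma summable_taylor_sqsum:
  assumes hol: "h holomorphic_on ball 0 1" and r: "0 \<le> r" "r < 1"
  shows "summable (\<lambda>n. (norm (taylor_coeff h n))\<^sup>2 * r ^ (2 * n))"
proof -
  define x where "x = (\<lambda>n. norm (taylor_coeff h n) * r ^ n)"
  have x: "summable x" "\<And>n. 0 \<le> x n"
    using summable_norm_taylor_coeff[OF hol r] r by (simp_all add: x_def)
  have sq: "(norm (taylor_coeff h n))\<^sup>2 * r ^ (2 * n) = (x n)\<^sup>2" for n
    by (simp add: x_def power_mult_distrib power_even_eq)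
  have "(x n)\<^sup>2 \<le> suminf x * x n" for n
    using sum_le_suminf[OF x(1), of "{n}"] x(2) by (simp add: power2_eq_square mult_right_mono)
  then show ?thesis
    unfolding sq using x(2) by (intro summable_comparison_test'[OF summable_mult[OF x(1), of "suminf x"]]) simp
qed

lemma has_integral_circlepath_taylor_coeff:
  assumes hol: "h holomorphic_on ball 0 1" and r: "0 < r" "r < 1"
  shows "((\<lambda>t. h (circlepath 0 r t) * cnj (exp (2 * of_real pi * \<i> * of_real t)) ^ n)
           has_integral taylor_coeff h n * of_real r ^ n) {0..1}"
proof -
  define e where "e = (\<lambda>t::real. exp (2 * of_real pi * \<i> * of_real t))"
  define C where "C = of_real r ^ n / (2 * pi * \<i>)"
  have "((\<lambda>u. h u / (u - 0) ^ Suc n) has_contour_integral (2 * pi * \<i>) / fact n * (deriv ^^ n) h 0)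
          (circlepath 0 r)"
  proof (rule Cauchy_has_contour_integral_higher_derivative_circlepath)
    show "continuous_on (cball 0 r) h"
      using holomorphic_on_imp_continuous_on[OF hol] by (rule continuous_on_subset) (use r in auto)
    show "h holomorphic_on ball 0 r"
      using hol by (rule holomorphic_on_subset) (use r in auto)
  qed (use r in simp)
  then have "((\<lambda>t. C * (h (circlepath 0 r t) / (circlepath 0 r t) ^ Suc n
                 * vector_derivative (circlepath 0 r) (at t within {0..1})))
               has_integral C * ((2 * pi * \<i>) / fact n * (deriv ^^ n) h 0)) {0..1}"
    unfolding has_contour_integral_def by (intro has_integral_mult_right) simp
  then have "((\<lambda>t. h (circlepath 0 r t) * cnj (e t) ^ n)
               has_integral C * ((2 * pi * \<i>) / fact n * (deriv ^^ n) h 0)) {0..1}"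
  proof (rule has_integral_eq[rotated])
    fix t :: real
    assume "t \<in> {0..1}"
    then have vd: "vector_derivative (circlepath 0 r) (at t within {0..1}) = 2 * pi * \<i> * r * e t"
      by (simp add: vector_derivative_circlepath01 e_def)
    have c: "circlepath 0 r t = r * e t"
      by (simp add: circlepath e_def)
    have e_cnj: "cnj (e t) = inverse (e t)"
      by (simp add: e_def exp_cnj exp_minus)
    have "e t \<noteq> 0" "of_real r \<noteq> (0::complex)"
      using r by (auto simp: e_def)
    then show "C * (h (circlepath 0 r t) / (circlepath 0 r t) ^ Suc n
                 * vector_derivative (circlepath 0 r) (at t within {0..1}))
               = h (circlepath 0 r t) * cnj (e t) ^ n"
      unfolding vd c e_cnj by (simp add: C_def field_simps)
  qed
  moreover have "C * ((2 * pi * \<i>) / fact n * (deriv ^^ n) h 0) = taylor_coeff h n * of_real r ^ n"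
    by (simp add: C_def taylor_coeff_def field_simps)
  ultimately show ?thesis
    by (simp only: e_def)
qed

lemma has_integral_circlepath_taylor_term:
  assumes hol: "h holomorphic_on ball 0 1" and r: "0 < r" "r < 1"
  shows "((\<lambda>t. taylor_coeff h n * of_real r ^ n * exp (2 * of_real pi * \<i> * of_real t) ^ n
                 * cnj (h (circlepath 0 r t)))
           has_integral of_real ((norm (taylor_coeff h n))\<^sup>2 * r ^ (2 * n))) {0..1}"
proof -
  define a where "a = taylor_coeff h n * of_real r ^ n"
  define f where "f = (\<lambda>t. h (circlepath 0 r t) * cnj (exp (2 * of_real pi * \<i> * of_real t)) ^ n)"
  have "(f has_integral a) {0..1}"
    unfolding f_def a_def by (rule has_integral_circlepath_taylor_coeff[OF hol r])
  then have "((cnj \<circ> f) has_integral cnj a) {0..1}"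
    by (simp only: has_integral_cnj)
  then have "((\<lambda>t. a * (cnj \<circ> f) t) has_integral a * cnj a) {0..1}"
    by (rule has_integral_mult_right)
  moreover have "(\<lambda>t. a * (cnj \<circ> f) t) = (\<lambda>t. taylor_coeff h n * of_real r ^ n
                   * exp (2 * of_real pi * \<i> * of_real t) ^ n * cnj (h (circlepath 0 r t)))"
    by (simp add: a_def f_def o_def mult_ac)
  moreover have "a * cnj a = of_real ((norm a)\<^sup>2)"
    by (rule complex_norm_square[symmetric])
  moreover have "(norm a)\<^sup>2 = (norm (taylor_coeff h n))\<^sup>2 * r ^ (2 * n)"
    using r by (simp add: a_def norm_mult norm_power power_mult_distrib power_even_eq)
  ultimately show ?thesis
    by (simp only:)
qed

lemma has_integral_suminf_Weierstrass:
  fixes F :: "nat \<Rightarrow> real \<Rightarrow> 'a :: banach"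
  assumes cont: "\<And>n. continuous_on {a..b} (F n)" and int: "\<And>n. (F n has_integral I n) {a..b}"
    and bound: "\<And>n t. t \<in> {a..b} \<Longrightarrow> norm (F n t) \<le> M n" and M: "summable M"
  shows "summable I" and "((\<lambda>t. \<Sum>n. F n t) has_integral (\<Sum>n. I n)) {a..b}"
proof -
  have unif: "uniform_limit {a..b} (\<lambda>N t. \<Sum>n<N. F n t) (\<lambda>t. \<Sum>n. F n t) sequentially"
    using bound M by (rule Weierstrass_m_test)
  have "continuous_on {a..b} (\<lambda>t. \<Sum>n<N. F n t)" for N
    by (intro continuous_intros cont)
  then obtain I' J where I': "\<And>N. ((\<lambda>t. \<Sum>n<N. F n t) has_integral I' N) {a..b}"
    and J: "((\<lambda>t. \<Sum>n. F n t) has_integral J) {a..b}" and lim: "I' \<longlonglongrightarrow> J"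
    using uniform_limit_integral[OF unif] by auto
  have "I' N = (\<Sum>n<N. I n)" for N
    using I'[of N] has_integral_sum[of "{..<N}" F I, OF _ int] by (simp add: has_integral_unique)
  then have "I' = (\<lambda>N. \<Sum>n<N. I n)"
    by (rule ext)
  then have "I sums J"
    using lim by (simp add: sums_def)
  then show "summable I" and "((\<lambda>t. \<Sum>n. F n t) has_integral (\<Sum>n. I n)) {a..b}"
    using J by (auto simp: sums_iff)
qed

lemma sums_norm_sq_circlepath:
  assumes hol: "h holomorphic_on ball 0 1" and r: "0 \<le> r" "r < 1"
  shows "(\<lambda>n. taylor_coeff h n * of_real r ^ n * exp (2 * of_real pi * \<i> * of_real t) ^ n
                * cnj (h (circlepath 0 r t)))
           sums of_real ((norm (h (circlepath 0 r t)))\<^sup>2)"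
proof -
  have c: "circlepath 0 r t = of_real r * exp (2 * of_real pi * \<i> * of_real t)"
    by (simp add: circlepath)
  then have "norm (circlepath 0 r t) = r"
    using r by (simp add: norm_mult)
  then have "(\<lambda>n. fps_nth (fps_expansion h 0) n * (circlepath 0 r t) ^ n) sums h (circlepath 0 r t)"
    using sums_eval_fps[of "circlepath 0 r t" "fps_expansion h 0"] r
      norm_less_fps_conv_radius[OF fps_conv_radius_expansion_unit_disc[OF hol], of r]
      eval_fps_expansion_unit_disc[OF hol, of "circlepath 0 r t"]
    by simp
  then have "(\<lambda>n. taylor_coeff h n * of_real r ^ n * exp (2 * of_real pi * \<i> * of_real t) ^ n
                * cnj (h (circlepath 0 r t))) sums (h (circlepath 0 r t) * cnj (h (circlepath 0 r t)))"
    by (intro sums_mult2) (simp add: c taylor_coeff_eq_fps_nth power_mult_distrib mult_ac)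
  moreover have "h (circlepath 0 r t) * cnj (h (circlepath 0 r t)) = of_real ((norm (h (circlepath 0 r t)))\<^sup>2)"
    by (rule complex_norm_square[symmetric])
  ultimately show ?thesis
    by (simp only:)
qed

lemma Parseval_circlepath:
  assumes hol: "h holomorphic_on ball 0 1" and r: "0 < r" "r < 1"
  shows "((\<lambda>t. (norm (h (circlepath 0 r t)))\<^sup>2) has_integral taylor_sqsum r h) {0..1}"
proof -
  define F where "F = (\<lambda>n t. taylor_coeff h n * of_real r ^ n * exp (2 * of_real pi * \<i> * of_real t) ^ n
                              * cnj (h (circlepath 0 r t)))"
  define M where "M = eval_fps (fps_majorant (fps_expansion h 0)) r"
  have norm_c: "norm (circlepath 0 r t) = r" for t
    using r by (simp add: circlepath norm_mult)
  have "continuous_on {0..1} (\<lambda>t. h (circlepath 0 r t))"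
    using holomorphic_on_imp_continuous_on[OF hol] norm_c r
    by (intro continuous_on_compose2[OF _ continuous_on_subset[OF path_circlepath[unfolded path_def]]])
      auto
  then have F_cont: "continuous_on {0..1} (F n)" for n
    unfolding F_def by (intro continuous_intros)
  have F_bound: "norm (F n t) \<le> norm (taylor_coeff h n) * r ^ n * M" for n t
  proof -
    have "norm (h (circlepath 0 r t)) \<le> M"
      using norm_eval_fps_le_majorant[of r "fps_expansion h 0" "circlepath 0 r t"]
        norm_less_fps_conv_radius[OF fps_conv_radius_expansion_unit_disc[OF hol], of r]
        eval_fps_expansion_unit_disc[OF hol, of "circlepath 0 r t"] norm_c[of t] r
      by (simp add: M_def)
    then show ?thesis
      using r by (simp add: F_def norm_mult norm_power mult_left_mono)
  qed
  have "((\<lambda>t. \<Sum>n. F n t) has_integral (\<Sum>n. complex_of_real ((norm (taylor_coeff h n))\<^sup>2 * r ^ (2 * n)))) {0..1}"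
    using summable_norm_taylor_coeff[OF hol] r unfolding F_def
    by (intro has_integral_suminf_Weierstrass(2)[OF F_cont[unfolded F_def]
          has_integral_circlepath_taylor_term[OF hol r] F_bound[unfolded F_def]])
      (simp add: summable_mult2)
  moreover have "(\<lambda>t. \<Sum>n. F n t) = (\<lambda>t. of_real ((norm (h (circlepath 0 r t)))\<^sup>2))"
    using sums_norm_sq_circlepath[OF hol] r by (simp add: F_def sums_iff)
  moreover have "(\<Sum>n. complex_of_real ((norm (taylor_coeff h n))\<^sup>2 * r ^ (2 * n))) = of_real (taylor_sqsum r h)"
    using summable_taylor_sqsum[OF hol] r by (simp add: taylor_sqsum_def suminf_of_real)
  ultimately have "((\<lambda>t. complex_of_real ((norm (h (circlepath 0 r t)))\<^sup>2)) has_integral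
                     of_real (taylor_sqsum r h)) {0..1}"
    by simp
  from has_integral_linear[OF this bounded_linear_Re] show ?thesis
    by (simp add: o_def)
qed

lemma taylor_sqsum_split_head:
  assumes "h holomorphic_on ball 0 1" "0 \<le> r" "r < 1"
  shows "taylor_sqsum r h = (norm (h 0))\<^sup>2 + (\<Sum>n. (norm (taylor_coeff h (Suc n)))\<^sup>2 * r ^ (2 * Suc n))"
  using suminf_split_head[OF summable_taylor_sqsum[OF assms]] by (simp add: taylor_sqsum_def)

lemma taylor_sqsum_cong:
  assumes "\<And>z. z \<in> ball 0 1 \<Longrightarrow> f z = g z"
  shows "taylor_sqsum r f = taylor_sqsum r g"
  unfolding taylor_sqsum_def using taylor_coeff_cong[OF assms] by simp

lemma taylor_sqsum_mono:
  assumes f_hol: "f holomorphic_on ball 0 1" and g_hol: "g holomorphic_on ball 0 1"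
    and r: "0 \<le> r" "r < 1" and le: "\<And>z. norm z = r \<Longrightarrow> norm (f z) \<le> norm (g z)"
  shows "taylor_sqsum r f \<le> taylor_sqsum r g"
proof (cases "r = 0")
  case True
  then show ?thesis
    using le[of 0] taylor_sqsum_split_head[OF f_hol r] taylor_sqsum_split_head[OF g_hol r]
    by (simp add: power_mono)
next
  case False
  with r have r': "0 < r" "r < 1"
    by simp_all
  have "norm (circlepath 0 r t) = r" for t
    using r' by (simp add: circlepath norm_mult norm_exp_eq_Re)
  then show ?thesis
    using le by (intro has_integral_le[OF Parseval_circlepath[OF f_hol r'] Parseval_circlepath[OF g_hol r']])
      (simp add: power_mono)
qed

lemma taylor_sqsum_const: "taylor_sqsum r (\<lambda>_. c) = (norm c)\<^sup>2"
proof -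
  have "fps_expansion (\<lambda>_. c) 0 = fps_const c"
    by (rule fps_expansion_eqI) simp
  then have "(\<lambda>n. (norm (taylor_coeff (\<lambda>_. c) n))\<^sup>2 * r ^ (2 * n)) = (\<lambda>n. if n = 0 then (norm c)\<^sup>2 else 0)"
    by (auto simp: taylor_coeff_eq_fps_nth)
  then show ?thesis
    using sums_single[of 0 "\<lambda>_. (norm c)\<^sup>2"] by (simp add: taylor_sqsum_def sums_iff)
qed

lemma taylor_sqsum_const_add:
  assumes hol: "u holomorphic_on ball 0 1" and u0: "u 0 = 0" and r: "0 \<le> r" "r < 1"
  shows "taylor_sqsum r (\<lambda>z. c + u z) = (norm c)\<^sup>2 + taylor_sqsum r u"
proof -
  have hol': "(\<lambda>z. c + u z) holomorphic_on ball 0 1"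
    by (intro holomorphic_intros hol)
  have "(\<lambda>z. c + u z) has_fps_expansion fps_const c + fps_expansion u 0"
    by (intro fps_expansion_intros has_fps_expansion_unit_disc hol)
  then have "taylor_coeff (\<lambda>z. c + u z) (Suc n) = taylor_coeff u (Suc n)" for n
    by (simp add: taylor_coeff_eq_fps_nth fps_expansion_eqI)
  then show ?thesis
    using taylor_sqsum_split_head[OF hol' r] taylor_sqsum_split_head[OF hol r] u0 by simp
qed

lemma taylor_sqsum_times_z:
  assumes hol: "v holomorphic_on ball 0 1" and r: "0 \<le> r" "r < 1"
  shows "taylor_sqsum r (\<lambda>z. z * v z) = r\<^sup>2 * taylor_sqsum r v"
proof -
  have hol': "(\<lambda>z. z * v z) holomorphic_on ball 0 1"
    by (intro holomorphic_intros hol)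
  have "(\<lambda>z. z * v z) has_fps_expansion fps_X * fps_expansion v 0"
    by (intro fps_expansion_intros has_fps_expansion_unit_disc hol)
  then have "taylor_coeff (\<lambda>z. z * v z) (Suc n) = taylor_coeff v n" for n
    by (simp add: taylor_coeff_eq_fps_nth fps_expansion_eqI)
  then have "(\<Sum>n. (norm (taylor_coeff (\<lambda>z. z * v z) (Suc n)))\<^sup>2 * r ^ (2 * Suc n)) = r\<^sup>2 * taylor_sqsum r v"
    unfolding taylor_sqsum_def using suminf_mult[OF summable_taylor_sqsum[OF hol r], of "r\<^sup>2"]
    by (simp add: power_add power2_eq_square mult_ac)
  then show ?thesis
    using taylor_sqsum_split_head[OF hol' r] by simp
qed

section \<open>Littlewood's subordination principle\<close>

(* g z = (sum k < N. b_k z^k) + z^N * taylor_tail g N z *)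
definition taylor_tail :: "(complex \<Rightarrow> complex) \<Rightarrow> nat \<Rightarrow> complex \<Rightarrow> complex" where
  "taylor_tail g N = eval_fps (fps_shift N (fps_expansion g 0))"

lemma holomorphic_taylor_tail:
  assumes "g holomorphic_on ball 0 1"
  shows "taylor_tail g N holomorphic_on ball 0 1"
  unfolding taylor_tail_def
  using norm_less_fps_conv_radius[OF fps_conv_radius_expansion_unit_disc[OF assms]]
  by (intro holomorphic_on_eval_fps) (auto simp: dist_norm)

lemma taylor_tail_0:
  assumes "g holomorphic_on ball 0 1" "norm w < 1"
  shows "taylor_tail g 0 w = g w"
  using eval_fps_expansion_unit_disc[OF assms] by (simp add: taylor_tail_def)

lemma taylor_tail_Suc:
  assumes "g holomorphic_on ball 0 1" "norm w < 1"
  shows "taylor_tail g N w = taylor_coeff g N + w * taylor_tail g (Suc N) w"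
  unfolding taylor_tail_def taylor_coeff_eq_fps_nth
  by (intro eval_fps_shift_Suc norm_less_fps_conv_radius fps_conv_radius_expansion_unit_disc assms)

lemma norm_taylor_tail_le:
  assumes "g holomorphic_on ball 0 1" "r < 1" "norm w \<le> r"
  shows "norm (taylor_tail g N w) \<le> eval_fps (fps_majorant (fps_shift N (fps_expansion g 0))) r"
proof -
  have "ereal r < fps_conv_radius (fps_expansion g 0)"
    using norm_less_fps_conv_radius[OF fps_conv_radius_expansion_unit_disc[OF assms(1)], of r] assms
    by (simp add: order_trans[OF norm_ge_zero])
  then show ?thesis
    unfolding taylor_tail_def using assms(3) by (intro norm_eval_fps_le_majorant) simp_all
qed

context
  fixes g \<omega> :: "complex \<Rightarrow> complex" and r :: real
  assumes g_hol: "g holomorphic_on ball 0 1" and \<omega>_hol: "\<omega> holomorphic_on ball 0 1"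
    and \<omega>_le: "\<And>z. norm z < 1 \<Longrightarrow> norm (\<omega> z) \<le> norm z" and r: "0 \<le> r" "r < 1"
begin

lemma holomorphic_taylor_tail_compose: "(taylor_tail g N \<circ> \<omega>) holomorphic_on ball 0 1"
  using \<omega>_le by (intro holomorphic_on_compose_gen[OF \<omega>_hol holomorphic_taylor_tail[OF g_hol]]) force

lemma Littlewood_step:
  "taylor_sqsum r (taylor_tail g N \<circ> \<omega>)
     \<le> (norm (taylor_coeff g N))\<^sup>2 + r\<^sup>2 * taylor_sqsum r (taylor_tail g (Suc N) \<circ> \<omega>)"
proof -
  note tail_hol = holomorphic_taylor_tail_compose[of "Suc N"]
  have "taylor_sqsum r (taylor_tail g N \<circ> \<omega>)
          = taylor_sqsum r (\<lambda>z. taylor_coeff g N + \<omega> z * (taylor_tail g (Suc N) \<circ> \<omega>) z)"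
    using \<omega>_le by (intro taylor_sqsum_cong) (auto intro: taylor_tail_Suc[OF g_hol] le_less_trans)
  also have "\<dots> = (norm (taylor_coeff g N))\<^sup>2 + taylor_sqsum r (\<lambda>z. \<omega> z * (taylor_tail g (Suc N) \<circ> \<omega>) z)"
    using \<omega>_le[of 0] by (intro taylor_sqsum_const_add r holomorphic_intros \<omega>_hol tail_hol) auto
  also have "taylor_sqsum r (\<lambda>z. \<omega> z * (taylor_tail g (Suc N) \<circ> \<omega>) z)
               \<le> taylor_sqsum r (\<lambda>z. z * (taylor_tail g (Suc N) \<circ> \<omega>) z)"
    using \<omega>_le r by (intro taylor_sqsum_mono holomorphic_intros \<omega>_hol tail_hol)
      (auto simp: norm_mult mult_right_mono)
  also have "\<dots> = r\<^sup>2 * taylor_sqsum r (taylor_tail g (Suc N) \<circ> \<omega>)"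
    by (rule taylor_sqsum_times_z[OF tail_hol r])
  finally show ?thesis
    by (simp add: o_def)
qed

lemma Littlewood_partial:
  "taylor_sqsum r (g \<circ> \<omega>)
     \<le> (\<Sum>k<N. (norm (taylor_coeff g k))\<^sup>2 * r ^ (2 * k)) + r ^ (2 * N) * taylor_sqsum r (taylor_tail g N \<circ> \<omega>)"
proof (induction N)
  case 0
  have "taylor_sqsum r (g \<circ> \<omega>) = taylor_sqsum r (taylor_tail g 0 \<circ> \<omega>)"
    using \<omega>_le by (intro taylor_sqsum_cong) (auto intro: taylor_tail_0[OF g_hol, symmetric] le_less_trans)
  then show ?case
    by (simp add: o_def)
next
  case (Suc N)
  have "r ^ (2 * N) * taylor_sqsum r (taylor_tail g N \<circ> \<omega>)
          \<le> r ^ (2 * N) * ((norm (taylor_coeff g N))\<^sup>2 + r\<^sup>2 * taylor_sqsum r (taylor_tail g (Suc N) \<circ> \<omega>))"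
    using r by (intro mult_left_mono Littlewood_step) simp
  also have "\<dots> = (norm (taylor_coeff g N))\<^sup>2 * r ^ (2 * N) + r ^ (2 * Suc N) * taylor_sqsum r (taylor_tail g (Suc N) \<circ> \<omega>)"
    by (simp add: power2_eq_square algebra_simps)
  finally show ?case
    using Suc.IH by (simp add: o_def)
qed

lemma Littlewood_remainder:
  "r ^ (2 * N) * taylor_sqsum r (taylor_tail g N \<circ> \<omega>) \<le> (\<Sum>k. norm (taylor_coeff g (k + N)) * r ^ (k + N))\<^sup>2"
proof -
  define T where "T = eval_fps (fps_majorant (fps_shift N (fps_expansion g 0))) r"
  have "ereal r < fps_conv_radius (fps_shift N (fps_expansion g 0))"
    using norm_less_fps_conv_radius[OF fps_conv_radius_expansion_unit_disc[OF g_hol], of r] r by simp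
  then have T_nonneg: "0 \<le> T" and T_summable: "summable (\<lambda>k. norm (taylor_coeff g (k + N)) * r ^ k)"
    using eval_fps_majorant_nonneg[of r] summable_fps[of r "fps_majorant (fps_shift N (fps_expansion g 0))"] r
    by (simp_all add: T_def taylor_coeff_eq_fps_nth)
  have "taylor_sqsum r (taylor_tail g N \<circ> \<omega>) \<le> taylor_sqsum r (\<lambda>_. complex_of_real T)"
  proof (rule taylor_sqsum_mono[OF holomorphic_taylor_tail_compose _ r])
    fix z :: complex
    assume "norm z = r"
    then show "norm ((taylor_tail g N \<circ> \<omega>) z) \<le> norm (complex_of_real T)"
      using norm_taylor_tail_le[OF g_hol r(2), of "\<omega> z" N] \<omega>_le[of z] r T_nonneg by (simp add: T_def)
  qed simp
  also have "\<dots> = T\<^sup>2"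
    using T_nonneg by (simp add: taylor_sqsum_const)
  finally have "r ^ (2 * N) * taylor_sqsum r (taylor_tail g N \<circ> \<omega>) \<le> (r ^ N * T)\<^sup>2"
    using r by (simp add: power_mult_distrib power_even_eq mult_left_mono)
  also have "r ^ N * T = (\<Sum>k. norm (taylor_coeff g (k + N)) * r ^ (k + N))"
    using suminf_mult[OF T_summable, of "r ^ N"]
    by (simp add: T_def eval_fps_majorant taylor_coeff_eq_fps_nth power_add mult_ac)
  finally show ?thesis .
qed

theorem Littlewood_subordination: "taylor_sqsum r (g \<circ> \<omega>) \<le> taylor_sqsum r g"
proof -
  define m where "m = (\<lambda>k. norm (taylor_coeff g k) * r ^ k)"
  have m: "summable m"
    unfolding m_def by (rule summable_norm_taylor_coeff[OF g_hol r])
  have bound: "taylor_sqsum r (g \<circ> \<omega>) \<le> taylor_sqsum r g + (\<Sum>k. m (k + N))\<^sup>2" for N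
  proof -
    have "(\<Sum>k<N. (norm (taylor_coeff g k))\<^sup>2 * r ^ (2 * k)) \<le> taylor_sqsum r g"
      unfolding taylor_sqsum_def using r by (intro sum_le_suminf summable_taylor_sqsum g_hol) auto
    then show ?thesis
      using Littlewood_partial[of N] Littlewood_remainder[of N] by (simp add: m_def)
  qed
  have "(\<lambda>N. taylor_sqsum r g + (\<Sum>k. m (k + N))\<^sup>2) \<longlonglongrightarrow> taylor_sqsum r g + (suminf m - suminf m)\<^sup>2"
    unfolding suminf_minus_initial_segment[OF m] by (intro tendsto_intros summable_LIMSEQ m)
  then have "(\<lambda>N. taylor_sqsum r g + (\<Sum>k. m (k + N))\<^sup>2) \<longlonglongrightarrow> taylor_sqsum r g"
    by simp
  then show ?thesis
    by (rule tendsto_le[OF trivial_limit_sequentially _ tendsto_const]) (simp add: bound)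
qed

end

section \<open>Quasi-subordination\<close>

lemma taylor_sqsum_quasi_subordinate_le:
  assumes f_hol: "f holomorphic_on ball 0 1" and g_hol: "g holomorphic_on ball 0 1"
    and \<omega>_hol: "\<omega> holomorphic_on ball 0 1"
    and \<omega>0: "\<omega> 0 = 0" and \<omega>_bd: "\<And>z. z \<in> ball 0 1 \<Longrightarrow> norm (\<omega> z) \<le> 1"
    and \<Phi>_bd: "\<And>z. z \<in> ball 0 1 \<Longrightarrow> norm (\<Phi> z) \<le> 1"
    and quasi: "\<And>z. z \<in> ball 0 1 \<Longrightarrow> f z = \<Phi> z * g (\<omega> z)"
    and r: "0 \<le> r" "r < 1"
  shows "taylor_sqsum r f \<le> taylor_sqsum r g"
proof -
  have "taylor_sqsum r f \<le> taylor_sqsum r (g \<circ> \<omega>)"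
  proof (rule taylor_sqsum_mono[OF f_hol compose_Schwarz_function(1)[OF g_hol \<omega>_hol \<omega>0 \<omega>_bd] r])
    fix z :: complex
    assume "norm z = r"
    then have "z \<in> ball 0 1"
      using r by simp
    then show "norm (f z) \<le> norm ((g \<circ> \<omega>) z)"
      using \<Phi>_bd[of z] by (simp add: quasi norm_mult mult_left_le_one_le)
  qed
  also have "\<dots> \<le> taylor_sqsum r g"
    using Schwarz_norm_le[OF \<omega>_hol \<omega>0 \<omega>_bd] by (rule Littlewood_subordination[OF g_hol \<omega>_hol _ r])
  finally show ?thesis .
qed

theorem lemma1:
  fixes f g \<Phi> \<omega> :: "complex \<Rightarrow> complex" and r :: real
  assumes f_hol: "f holomorphic_on ball 0 1"
    and g_hol: "g holomorphic_on ball 0 1"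
    and \<Phi>_hol: "\<Phi> holomorphic_on ball 0 1"
    and \<omega>_hol: "\<omega> holomorphic_on ball 0 1"
    and \<omega>0: "\<omega> 0 = 0"
    and \<omega>_bd: "\<And>z. z \<in> ball 0 1 \<Longrightarrow> norm (\<omega> z) \<le> 1"
    and \<Phi>_bd: "\<And>z. z \<in> ball 0 1 \<Longrightarrow> norm (\<Phi> z) \<le> 1"
    and quasi: "\<And>z. z \<in> ball 0 1 \<Longrightarrow> f z = \<Phi> z * g (\<omega> z)"
    and r: "0 \<le> r" "r \<le> 1/3"
  shows "(\<Sum>n. norm (taylor_coeff f n) * r ^ n)
           + (1 / (1 + norm (taylor_coeff f 0)) + r / (1 - r))
             * (\<Sum>n. (norm (taylor_coeff f (Suc n)))\<^sup>2 * r ^ (2 * Suc n))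
         \<le> (\<Sum>n. norm (taylor_coeff g n) * r ^ n)
           + (1 / (1 + norm (taylor_coeff g 0 * \<Phi> 0)) + r / (1 - r))
             * ((norm (taylor_coeff g 0))\<^sup>2 * (1 - (norm (\<Phi> 0))\<^sup>2)
                + (\<Sum>n. (norm (taylor_coeff g (Suc n)))\<^sup>2 * r ^ (2 * Suc n)))"
proof -
  have r1: "0 \<le> r" "r < 1"
    using r by simp_all
  have f0: "f 0 = g 0 * \<Phi> 0"
    using quasi[of 0] \<omega>0 by simp
  have "taylor_sqsum r f \<le> taylor_sqsum r g"
    by (rule taylor_sqsum_quasi_subordinate_le[OF f_hol g_hol \<omega>_hol \<omega>0 \<omega>_bd \<Phi>_bd quasi r1])
  then have "(\<Sum>n. (norm (taylor_coeff f (Suc n)))\<^sup>2 * r ^ (2 * Suc n))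
               \<le> (norm (g 0))\<^sup>2 * (1 - (norm (\<Phi> 0))\<^sup>2) + (\<Sum>n. (norm (taylor_coeff g (Suc n)))\<^sup>2 * r ^ (2 * Suc n))"
    unfolding taylor_sqsum_split_head[OF f_hol r1] taylor_sqsum_split_head[OF g_hol r1] f0
    by (simp add: norm_mult power_mult_distrib algebra_simps)
  moreover have "0 \<le> 1 / (1 + norm (f 0)) + r / (1 - r)"
    using r1 by simp
  ultimately show ?thesis
    using majorant_quasi_subordinate_le[OF f_hol g_hol \<Phi>_hol \<omega>_hol \<omega>0 \<omega>_bd \<Phi>_bd quasi r] f0
    by (simp add: add_mono mult_left_mono)
qed

end
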